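(* Let $p>1$, $1\le q<\infty$, $T>0$, $I=(0,T)$, $\overline{I}=[0,T]$, $X$ an $\mathbb{R}$-smooth Banach space, $Y$ a Banach space. For every $t\in\overline{I}$ let $\mathcal{D}(A(t))\subset\mathcal{D}(B(t))\subset X$ be subspaces, $A(t):\mathcal{D}(A(t))\to X$, $B(t):\mathcal{D}(B(t))\to Y$ (possibly nonlinear) operators, $\mathcal{M}(t):=\{y\in\mathcal{D}(A(t)):B(t)(y)=0\}$. Let $w\in C(\overline{I};X)\cap C^1(I;X)$ satisfy $\frac{dw}{dt}=A(t)(w)$ on $I$, $w(0)=w_0$, $w(t)\in\mathcal{M}(t)$ for $t\in I$. Let $w_\theta\in C(\overline{I};X)\cap C^1(I;X)$ with $w_\theta(t)\in\mathcal{D}(A(t))$, residuals $\mathcal{R}_{eq}=\frac{dw_\theta}{dt}-A(t)(w_\theta)$, $\mathcal{R}_{in}=w_\theta(0)-w_0$, $\mathcal{R}_{bn}=B(t)(w_\theta)$, and $\mathcal{E}:=\|w_\theta-w\|^q_{L^q(I;X)}$. Assume for every $t\in\overline{I}$ that $-A(t)$ is $(p,\psi(t))$-submonotone on $\mathcal{M}(t)$ with function $\Lambda(t,\cdot,\cdot)$, that $\psi(t)$ is subordinate to $B(t)$ on $\mathcal{M}(t)$ with function $\gamma(t,\cdot,\cdot)$ and a $t$-independent $\rho\in C(Y;\mathbb{R}^+)$, that $t\mapsto\gamma(t,w_\theta(t),w(t))\in C(\overline{I})$ and $t\mapsto\Lambda(t,w_\theta(t),w(t))\in L^1(I)$. Assume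 further: (i) there are sets $\mathcal{T}_{eq},\mathcal{T}_{in},\mathcal{T}_{bn}$, numbers $\alpha_{eq},\alpha_{in},\alpha_{bn}>0$ and, for each $M\in\mathbb{N}$, maps $\mathcal{Q}_{M,eq}:L^p(I;X)\times\mathcal{T}_{eq}^M\to\mathbb{R}$, $\mathcal{Q}_{M,in}:X\times\mathcal{T}_{in}^M\to\mathbb{R}$, $\mathcal{Q}_{M,bn}:L^p(I;Y)\times\mathcal{T}_{bn}^M\to\mathbb{R}$ such that for all $M$, all point tuples, all $v\in L^p(I;X)$, $y\in X$, $g\in L^p(I;Y)$: $|\|v\|^p_{L^p(I;X)}-\mathcal{Q}_{M,eq}(v,\cdot)|\le\beta^*_{eq}(v)M^{-\alpha_{eq}}$, $|\|y\|^p-\mathcal{Q}_{M,in}(y,\cdot)|\le\beta^*_{in}(y)M^{-\alpha_{in}}$, $|\|g\|^p_{L^p(I;Y)}-\mathcal{Q}_{M,bn}(g,\cdot)|\le\beta^*_{bn}(g)M^{-\alpha_{bn}}$ for some $\beta^*_{eq}(v),\beta^*_{in}(y),\beta^*_{bn}(g)\ge0$; (ii) training sets of sizes $M_{eq},M_{in},M_{bn}$ are given in $\mathcal{T}_{eq},\mathcal{T}_{in},\mathcal{T}_{bn}$ respectively, and the training errors are $\mathcal{E}_{T,eq}=\mathcal{Q}_{M_{eq},eq}(\mathcal{R}_{eq},\ldots)$, $\mathcal{E}_{T,in}=\mathcal{Q}_{M_{in},in}(\mathcal{R}_{in},\ldots)$, $\mathcal{E}_{T,bn}=\mathcal{Q}_{M_{bn},bn}(\mathcal{R}_{bn},\ldots)$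 evaluated on these sets (with $\mathcal{R}_{eq}\in L^p(I;X)$, $\mathcal{R}_{bn}\in L^p(I;Y)$); (iii) $\|\rho(g)\|_{L^1(I)}\le h(\|g\|_{L^p(I;Y)})$ for all $g\in L^p(I;Y)$, where $\rho(g)(t)=\rho(g(t))$ and $h:\mathbb{R}^+\to\mathbb{R}^+$ is nondecreasing with $h(\mu)\to0$ as $\mu\to0$. Then $$\mathcal{E}\le\tilde{\mathcal{C}}^{\frac{q}{p}}\left(\frac{p\left(e^{\frac{q(p-1)T}{p}}-1\right)}{q(p-1)}\right)e^{q\|\Lambda(\cdot,w_\theta(\cdot),w(\cdot))\|_{L^1(I)}},$$ where $$\tilde{\mathcal{C}}=\mathcal{E}_{T,eq}+\beta^*_{eq}(\mathcal{R}_{eq})M_{eq}^{-\alpha_{eq}}+\mathcal{E}_{T,in}+\beta^*_{in}(\mathcal{R}_{in})M_{in}^{-\alpha_{in}}+p\|\gamma(\cdot,w_\theta(\cdot),w(\cdot))\|_{C(\overline{I})}\,h\!\left(\left(\mathcal{E}_{T,bn}+\beta^*_{bn}(\mathcal{R}_{bn})M_{bn}^{-\alpha_{bn}}\right)^{\frac1p}\right).$$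
   Context: $X$ is $\mathbb{R}$-smooth if for all $y$ with $\|y\|=1$ and all $\chi$ the limit $D(\|\cdot\|)(y;\chi)=\lim_{\mathbb{R}\ni s\to0}\frac{\|y+s\chi\|-\|y\|}{s}$ exists (hence it exists for all $y\ne0$). Real $p$-form: $\langle y_1,y_2\rangle_p:=\|y_2\|^{p-1}D(\|\cdot\|)(y_2;y_1)$ for $y_2\neq0$, $\langle y_1,0\rangle_p:=0$. $-A$ is $(p,\psi)$-submonotone on a subspace $\mathcal{M}\subset\mathcal{D}(A)$ (with $\psi:\mathcal{D}(A)\times\mathcal{M}\to\mathbb{R}$) if $\langle A(\chi)-A(y),\chi-y\rangle_p\le\psi(\chi,y)+\Lambda(\chi,y)\|\chi-y\|^p$ for all $\chi\in\mathcal{D}(A)$, $y\in\mathcal{M}$, with some $\Lambda(\chi,y)\ge0$. $\psi$ is subordinate to $B:\mathcal{D}(B)\to Y$ on $\mathcal{M}$ if there exists $\rho\in C(Y;\mathbb{R}^+)$ with $\rho(\xi)\to0$ as $\xi\to0$ and $|\psi(\chi,y)|\le\gamma(\chi,y)\rho(B(\chi)-B(y))$ for all $\chi$ in the first domain of $\psi$ and $y\in\mathcal{M}$, with some $\gamma(\chi,y)\ge0$. *)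

theory Defs
  imports "HOL-Analysis.Analysis"
begin

definition R_smooth :: "'a::real_normed_vector itself \<Rightarrow> bool" where
  "R_smooth _ \<longleftrightarrow> (\<forall>(y::'a) z. norm y = 1 \<longrightarrow>
      (\<exists>L. ((\<lambda>s::real. (norm (y + s *\<^sub>R z) - norm y) / s) \<longlongrightarrow> L) (at 0)))"

definition Dnorm :: "'a::real_normed_vector \<Rightarrow> 'a \<Rightarrow> real" where
  "Dnorm y z = Lim (at (0::real)) (\<lambda>s. (norm (y + s *\<^sub>R z) - norm y) / s)"

definition pform :: "real \<Rightarrow> 'a::real_normed_vector \<Rightarrow> 'a \<Rightarrow> real" where
  "pform p y1 y2 = (if y2 = 0 then 0 else norm y2 powr (p - 1) * Dnorm y2 y1)"

definition neg_submonotone ::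
  "real \<Rightarrow> ('x::real_normed_vector \<Rightarrow> 'x) \<Rightarrow> 'x set \<Rightarrow> 'x set
     \<Rightarrow> ('x \<Rightarrow> 'x \<Rightarrow> real) \<Rightarrow> ('x \<Rightarrow> 'x \<Rightarrow> real) \<Rightarrow> bool" where
  "neg_submonotone p A DA M \<psi> \<Lambda> \<longleftrightarrow> M \<subseteq> DA \<and>
     (\<forall>z\<in>DA. \<forall>y\<in>M. \<Lambda> z y \<ge> 0 \<and>
        pform p (A z - A y) (z - y) \<le> \<psi> z y + \<Lambda> z y * norm (z - y) powr p)"

definition subordinate ::
  "('x \<Rightarrow> 'x \<Rightarrow> real) \<Rightarrow> ('x \<Rightarrow> 'y::real_normed_vector) \<Rightarrow> 'x set \<Rightarrow> 'x set
     \<Rightarrow> ('x \<Rightarrow> 'x \<Rightarrow> real) \<Rightarrow> ('y \<Rightarrow> real) \<Rightarrow> bool" where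
  "subordinate \<psi> B DA M \<gamma> \<rho> \<longleftrightarrow>
     continuous_on UNIV \<rho> \<and> (\<forall>\<xi>. \<rho> \<xi> \<ge> 0) \<and> (\<rho> \<longlongrightarrow> 0) (at 0) \<and>
     (\<forall>z\<in>DA. \<forall>y\<in>M. \<gamma> z y \<ge> 0 \<and> \<bar>\<psi> z y\<bar> \<le> \<gamma> z y * \<rho> (B z - B y))"

definition C1_on :: "real set \<Rightarrow> (real \<Rightarrow> 'a::real_normed_vector) \<Rightarrow> bool" where
  "C1_on S f \<longleftrightarrow> (\<exists>f'. (\<forall>t\<in>S. (f has_vector_derivative f' t) (at t)) \<and> continuous_on S f')"

definition Lp :: "real \<Rightarrow> real set \<Rightarrow> (real \<Rightarrow> 'a::real_normed_vector) set" where
  "Lp p I = {v. v \<in> borel_measurable (lebesgue_on I) \<and>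
                 integrable (lebesgue_on I) (\<lambda>t. norm (v t) powr p)}"

definition Lp_pow :: "real \<Rightarrow> real set \<Rightarrow> (real \<Rightarrow> 'a::real_normed_vector) \<Rightarrow> real" where
  "Lp_pow p I v = integral\<^sup>L (lebesgue_on I) (\<lambda>t. norm (v t) powr p)"

definition Lp_norm :: "real \<Rightarrow> real set \<Rightarrow> (real \<Rightarrow> 'a::real_normed_vector) \<Rightarrow> real" where
  "Lp_norm p I v = Lp_pow p I v powr (1 / p)"

end

theory Submission
  imports Defs
begin

text \<open>Put \<open>e = w\<^sub>\<theta> - w\<close> and \<open>\<phi> = \<parallel>e\<parallel>\<^sup>p\<close>. In an R-smooth space \<open>\<phi>\<close> is differentiable with
  \<open>\<phi>' = p \<langle>e', e\<rangle>\<^sub>p\<close>, and \<open>\<langle>r + d, e\<rangle>\<^sub>p \<le> \<parallel>r\<parallel> \<parallel>e\<parallel>\<^sup>p\<^sup>-\<^sup>1 + \<langle>d, e\<rangle>\<^sub>p\<close>. Write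
  \<open>e' = R\<^sub>e\<^sub>q + (A(w\<^sub>\<theta>) - A(w))\<close>: Young's inequality bounds \<open>p \<parallel>R\<^sub>e\<^sub>q\<parallel> \<parallel>e\<parallel>\<^sup>p\<^sup>-\<^sup>1\<close> by
  \<open>\<parallel>R\<^sub>e\<^sub>q\<parallel>\<^sup>p + (p - 1) \<phi>\<close>, and submonotonicity and subordination (with \<open>B(w) = 0\<close>) bound
  \<open>\<langle>A(w\<^sub>\<theta>) - A(w), e\<rangle>\<^sub>p\<close> by \<open>\<Gamma> \<rho>(R\<^sub>b\<^sub>n) + \<bar>\<Lambda>\<bar> \<phi>\<close>, where \<open>\<Gamma> = sup \<bar>\<gamma>\<bar>\<close>. Hence
  \<open>\<phi>' \<le> ((p - 1) + p \<bar>\<Lambda>\<bar>) \<phi> + \<parallel>R\<^sub>e\<^sub>q\<parallel>\<^sup>p + p \<Gamma> \<rho>(R\<^sub>b\<^sub>n)\<close>, and Gronwall's inequality in integral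
  form gives \<open>\<phi>(t) \<le> K exp ((p - 1) t + p \<parallel>\<Lambda>\<parallel>\<^sub>L\<^sub>1)\<close> with
  \<open>K = \<parallel>R\<^sub>i\<^sub>n\<parallel>\<^sup>p + \<parallel>R\<^sub>e\<^sub>q\<parallel>\<^sup>p\<^sub>L\<^sub>p + p \<Gamma> \<parallel>\<rho>(R\<^sub>b\<^sub>n)\<parallel>\<^sub>L\<^sub>1\<close>. Raising this to the power \<open>q/p\<close> and
  integrating over \<open>(0, T)\<close> gives the estimate with \<open>K\<close> in place of the constant \<open>C\<close> of the
  statement, and the quadrature error bounds together with \<open>\<parallel>\<rho>(g)\<parallel>\<^sub>L\<^sub>1 \<le> h(\<parallel>g\<parallel>\<^sub>L\<^sub>p)\<close> show
  \<open>K \<le> C\<close>.\<close>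

section \<open>Gronwall's inequality\<close>

lemma exp_neg_le_one_minus:
  fixes x \<epsilon> :: real
  assumes "0 < \<epsilon>" "0 \<le> x" "(1 + \<epsilon>) * x < \<epsilon>"
  shows "exp (- ((1 + \<epsilon>) * x)) \<le> 1 - x"
proof -
  define y where "y = (1 + \<epsilon>) * x"
  have y: "0 \<le> y" using assms by (simp add: y_def)
  have "exp (- y) \<le> 1 / (1 + y)"
    using exp_ge_add_one_self[of y] y by (simp add: exp_minus field_simps)
  also have "1 / (1 + y) \<le> 1 - x"
  proof -
    have "x * y \<le> x * \<epsilon>" using assms by (intro mult_left_mono) (auto simp: y_def)
    hence "1 \<le> (1 - x) * (1 + y)" by (simp add: y_def algebra_simps)
    thus ?thesis using y by (simp add: field_simps)
  qed
  finally show ?thesis by (simp add: y_def)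
qed

lemma integrable_on_mult_continuous:
  fixes a \<phi> :: "real \<Rightarrow> real"
  assumes "a integrable_on {c..d}" "\<And>t. t \<in> {c..d} \<Longrightarrow> 0 \<le> a t" "continuous_on {c..d} \<phi>"
  shows "(\<lambda>t. a t * \<phi> t) integrable_on {c..d}"
proof -
  have "(\<lambda>t. \<phi> t * a t) absolutely_integrable_on {c..d}"
  proof (rule absolutely_integrable_bounded_measurable_product_real)
    show "\<phi> \<in> borel_measurable (lebesgue_on {c..d})"
      using assms(3) by (rule continuous_imp_measurable_on_sets_lebesgue) simp
    show "bounded (\<phi> ` {c..d})"
      using assms(3) by (intro compact_imp_bounded compact_continuous_image) simp_all
    show "a absolutely_integrable_on {c..d}"
      using assms(1,2) by (rule nonnegative_absolutely_integrable_1)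
  qed simp
  thus ?thesis by (simp add: set_lebesgue_integral_eq_integral(1) mult.commute)
qed

lemma first_nonneg_point:
  fixes f :: "real \<Rightarrow> real"
  assumes f_cont: "continuous_on {0..T} f" and "f 0 < 0" and "t \<in> {0..T}" "0 \<le> f t"
  obtains \<tau> where "0 < \<tau>" "\<tau> \<le> T" "0 \<le> f \<tau>" "\<And>s. 0 \<le> s \<Longrightarrow> s < \<tau> \<Longrightarrow> f s < 0"
proof -
  define S where "S = {0..T} \<inter> f -` {0..}"
  have "S \<noteq> {}" using assms(3,4) by (auto simp: S_def)
  moreover have S_bdd: "bdd_below S" by (auto simp: S_def bdd_below_def)
  moreover have "closed S" unfolding S_def
    by (rule continuous_closed_preimage[OF f_cont]) auto
  ultimately have "Inf S \<in> S" by (rule closed_contains_Inf)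
  hence \<tau>: "0 \<le> Inf S" "Inf S \<le> T" "0 \<le> f (Inf S)" by (auto simp: S_def)
  have "f s < 0" if "0 \<le> s" "s < Inf S" for s
  proof (rule ccontr)
    assume "\<not> f s < 0"
    hence "s \<in> S" using that \<tau>(2) by (auto simp: S_def)
    hence "Inf S \<le> s" using S_bdd by (rule cInf_lower)
    thus False using that by simp
  qed
  moreover have "Inf S \<noteq> 0" using \<tau>(3) \<open>f 0 < 0\<close> by auto
  ultimately show ?thesis using that \<tau> by (metis order_le_less)
qed

lemma integral_left_of_point_small:
  fixes a :: "real \<Rightarrow> real"
  assumes a_int: "a integrable_on {0..T}" and \<tau>: "0 < \<tau>" "\<tau> \<le> T" and "0 < \<eta>"
  obtains s where "0 \<le> s" "s < \<tau>" "integral {s..\<tau>} a < \<eta>"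
proof -
  have "continuous_on {0..T} (\<lambda>t. integral {0..t} a)"
    by (rule indefinite_integral_continuous_1[OF a_int])
  then obtain \<delta> where \<delta>: "0 < \<delta>" "\<And>s. s \<in> {0..T} \<Longrightarrow> dist s \<tau> < \<delta> \<Longrightarrow>
      dist (integral {0..s} a) (integral {0..\<tau>} a) < \<eta>"
    using \<tau> \<open>0 < \<eta>\<close> unfolding continuous_on_iff by (metis atLeastAtMost_iff less_imp_le)
  define s where "s = max 0 (\<tau> - \<delta> / 2)"
  have s: "0 \<le> s" "s < \<tau>" "dist s \<tau> < \<delta>" using \<tau> \<delta>(1) by (auto simp: s_def dist_real_def)
  have "integral {0..s} a + integral {s..\<tau>} a = integral {0..\<tau>} a"
    using s \<tau> integrable_on_subinterval[OF a_int, of 0 \<tau>]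
    by (intro Henstock_Kurzweil_Integration.integral_combine) auto
  thus ?thesis using that[OF s(1,2)] \<delta>(2)[of s] s \<tau> by (simp add: dist_real_def)
qed

text \<open>\<open>v = (K + \<epsilon>) exp ((1 + \<epsilon>) \<integral>\<^sub>0\<^sup>t a)\<close> is a strict supersolution: at the first time
  \<open>\<tau>\<close> where \<open>u = K + \<integral>\<^sub>0\<^sup>t a \<phi>\<close> reaches \<open>v\<close>, the increment of \<open>u\<close> over a short interval
  \<open>[s, \<tau>]\<close> is at most \<open>x u(\<tau>)\<close> with \<open>x = \<integral>\<^sub>s\<^sup>\<tau> a\<close>, while that of \<open>v\<close> is at least
  \<open>(1 - exp (-(1 + \<epsilon>) x)) v(\<tau>) \<ge> x v(\<tau>)\<close> for small \<open>x\<close>; this contradicts \<open>u(s) < v(s)\<close>.\<close>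
lemma gronwall_inequality_perturbed:
  fixes \<phi> a :: "real \<Rightarrow> real"
  assumes \<phi>_cont: "continuous_on {0..T} \<phi>" and a_int: "a integrable_on {0..T}"
    and a_nonneg: "\<And>t. t \<in> {0..T} \<Longrightarrow> 0 \<le> a t" and \<phi>_nonneg: "\<And>t. t \<in> {0..T} \<Longrightarrow> 0 \<le> \<phi> t"
    and \<phi>_le: "\<And>t. t \<in> {0..T} \<Longrightarrow> \<phi> t \<le> K + integral {0..t} (\<lambda>s. a s * \<phi> s)"
    and K: "0 \<le> K" and \<epsilon>: "0 < \<epsilon>" and t: "t \<in> {0..T}"
  shows "\<phi> t < (K + \<epsilon>) * exp ((1 + \<epsilon>) * integral {0..t} a)"
proof -
  define u where "u t = K + integral {0..t} (\<lambda>s. a s * \<phi> s)" for t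
  define v where "v t = (K + \<epsilon>) * exp ((1 + \<epsilon>) * integral {0..t} a)" for t
  have a\<phi>_int: "(\<lambda>s. a s * \<phi> s) integrable_on {0..T}"
    using a_int a_nonneg \<phi>_cont by (rule integrable_on_mult_continuous)
  have sub_int: "f integrable_on {c..d}" if "f integrable_on {0..T}" "0 \<le> c" "d \<le> T"
    for f :: "real \<Rightarrow> real" and c d
    using integrable_on_subinterval[OF that(1)] that(2,3) by auto
  have uv_cont: "continuous_on {0..T} (\<lambda>t. u t - v t)"
    unfolding u_def v_def by (intro continuous_intros indefinite_integral_continuous_1 a_int a\<phi>_int)
  have u_split: "u t = u s + integral {s..t} (\<lambda>r. a r * \<phi> r)"
    and a_split: "integral {0..t} a = integral {0..s} a + integral {s..t} a"
    if "0 \<le> s" "s \<le> t" "t \<le> T" for s t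
    using Henstock_Kurzweil_Integration.integral_combine[OF that(1,2) sub_int[OF a\<phi>_int, of 0 t]]
      Henstock_Kurzweil_Integration.integral_combine[OF that(1,2) sub_int[OF a_int, of 0 t]] that
    by (simp_all add: u_def)
  have "u t < v t" if t: "t \<in> {0..T}" for t
  proof (rule ccontr)
    assume "\<not> u t < v t"
    moreover have "u 0 - v 0 < 0" using \<epsilon> by (simp add: u_def v_def)
    ultimately obtain \<tau> where \<tau>: "0 < \<tau>" "\<tau> \<le> T" "0 \<le> u \<tau> - v \<tau>"
      and below: "\<And>s. 0 \<le> s \<Longrightarrow> s < \<tau> \<Longrightarrow> u s - v s < 0"
      using first_nonneg_point[OF uv_cont _ t, of thesis] by auto
    have v_pos: "0 < v \<tau>" using K \<epsilon> by (simp add: v_def)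
    have "0 < \<epsilon> / (1 + \<epsilon>)" using \<epsilon> by simp
    then obtain s where s: "0 \<le> s" "s < \<tau>" and "integral {s..\<tau>} a < \<epsilon> / (1 + \<epsilon>)"
      by (rule integral_left_of_point_small[OF a_int \<tau>(1,2)])
    define x where "x = integral {s..\<tau>} a"
    have x_nonneg: "0 \<le> x"
      unfolding x_def using sub_int[OF a_int, of s \<tau>] s \<tau> a_nonneg by (intro integral_nonneg) auto
    have x_small: "(1 + \<epsilon>) * x < \<epsilon>"
      using \<open>integral {s..\<tau>} a < \<epsilon> / (1 + \<epsilon>)\<close> \<epsilon> by (simp add: x_def field_simps)
    have "integral {s..\<tau>} (\<lambda>r. a r * \<phi> r) \<le> integral {s..\<tau>} (\<lambda>r. a r * u \<tau>)"
    proof (rule integral_le)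
      show "(\<lambda>r. a r * \<phi> r) integrable_on {s..\<tau>}" using sub_int[OF a\<phi>_int] s \<tau> by simp
      show "(\<lambda>r. a r * u \<tau>) integrable_on {s..\<tau>}"
        using sub_int[OF a_int, of s \<tau>] s \<tau> integrable_on_mult_left by auto
      fix r assume r: "r \<in> {s..\<tau>}"
      have "0 \<le> integral {r..\<tau>} (\<lambda>s. a s * \<phi> s)"
        using sub_int[OF a\<phi>_int, of r \<tau>] r s \<tau> a_nonneg \<phi>_nonneg by (intro integral_nonneg) auto
      hence "\<phi> r \<le> u \<tau>" using \<phi>_le[of r] u_split[of r \<tau>] r s \<tau> by (simp add: u_def)
      thus "a r * \<phi> r \<le> a r * u \<tau>" using a_nonneg[of r] r s \<tau> by (intro mult_left_mono) auto
    qed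
    hence "u \<tau> - u s \<le> x * u \<tau>"
      using u_split[of s \<tau>] s \<tau>(2) by (simp add: x_def)
    hence "u \<tau> * (1 - x) \<le> u s" by (simp add: algebra_simps)
    also have "u s < v s" using below[OF s] by simp
    also have "v s = v \<tau> * exp (- ((1 + \<epsilon>) * x))"
      using a_split[of s \<tau>] s \<tau> by (simp add: v_def x_def algebra_simps flip: exp_add)
    also have "\<dots> \<le> u \<tau> * exp (- ((1 + \<epsilon>) * x))" using \<tau>(3) by simp
    also have "\<dots> \<le> u \<tau> * (1 - x)"
      using exp_neg_le_one_minus[OF \<epsilon> x_nonneg x_small] \<tau>(3) v_pos by (intro mult_left_mono) auto
    finally show False by simp
  qed
  from this[OF t] show ?thesis using \<phi>_le[OF t] unfolding u_def v_def by linarith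
qed

lemma gronwall_inequality:
  fixes \<phi> a :: "real \<Rightarrow> real"
  assumes "continuous_on {0..T} \<phi>" "a integrable_on {0..T}"
    "\<And>t. t \<in> {0..T} \<Longrightarrow> 0 \<le> a t" "\<And>t. t \<in> {0..T} \<Longrightarrow> 0 \<le> \<phi> t"
    "\<And>t. t \<in> {0..T} \<Longrightarrow> \<phi> t \<le> K + integral {0..t} (\<lambda>s. a s * \<phi> s)"
    "0 \<le> K" "t \<in> {0..T}"
  shows "\<phi> t \<le> K * exp (integral {0..t} a)"
proof -
  have lim: "((\<lambda>\<epsilon>. (K + \<epsilon>) * exp ((1 + \<epsilon>) * integral {0..t} a))
      \<longlongrightarrow> K * exp (integral {0..t} a)) (at_right 0)"
    by (auto intro!: tendsto_eq_intros)
  have "\<forall>\<^sub>F \<epsilon> in at_right 0. \<phi> t \<le> (K + \<epsilon>) * exp ((1 + \<epsilon>) * integral {0..t} a)"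
    using eventually_at_right_less[of 0] by (rule eventually_mono)
      (intro less_imp_le gronwall_inequality_perturbed[OF assms(1-6) _ assms(7)])
  thus ?thesis by (rule tendsto_lowerbound[OF lim]) simp
qed

lemma derivative_le_imp_diff_le_integral:
  fixes \<phi> g :: "real \<Rightarrow> real"
  assumes "a \<le> b" "continuous_on {a..b} \<phi>"
    and "\<And>t. t \<in> {a<..<b} \<Longrightarrow> (\<phi> has_real_derivative \<phi>' t) (at t)"
    and "\<And>t. t \<in> {a<..<b} \<Longrightarrow> \<phi>' t \<le> g t" and "g integrable_on {a..b}"
  shows "\<phi> b - \<phi> a \<le> integral {a..b} g"
proof -
  have "(\<phi>' has_integral \<phi> b - \<phi> a) {a..b}"
    using assms(1-3) by (intro fundamental_theorem_of_calculus_interior)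
      (auto simp: has_real_derivative_iff_has_vector_derivative)
  hence "(\<phi>' has_integral \<phi> b - \<phi> a) {a<..<b}"
    using has_integral_open_interval[of \<phi>' _ a b] by simp
  moreover have "(g has_integral integral {a..b} g) {a<..<b}"
    using assms(5) has_integral_open_interval[of g _ a b] by (simp add: has_integral_integral)
  ultimately show ?thesis using assms(4) by (rule has_integral_le)
qed

lemma integral_form_of_derivative_le:
  fixes \<phi> a b :: "real \<Rightarrow> real"
  assumes \<phi>_cont: "continuous_on {0..T} \<phi>"
    and \<phi>_deriv: "\<And>t. t \<in> {0<..<T} \<Longrightarrow> (\<phi> has_real_derivative \<phi>' t) (at t)"
    and \<phi>'_le: "\<And>t. t \<in> {0<..<T} \<Longrightarrow> \<phi>' t \<le> a t * \<phi> t + b t"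
    and a_int: "a integrable_on {0..T}" and b_int: "b integrable_on {0..T}"
    and a_nonneg: "\<And>t. 0 \<le> a t" and b_nonneg: "\<And>t. 0 \<le> b t" and s: "s \<in> {0..T}"
  shows "\<phi> s \<le> \<phi> 0 + integral {0..T} b + integral {0..s} (\<lambda>r. a r * \<phi> r)"
proof -
  have sub_int: "f integrable_on {0..s}" if "f integrable_on {0..T}" for f :: "real \<Rightarrow> real"
    using integrable_on_subinterval[OF that] s by auto
  have a\<phi>_int: "(\<lambda>r. a r * \<phi> r) integrable_on {0..s}"
    using sub_int[OF a_int] a_nonneg continuous_on_subset[OF \<phi>_cont, of "{0..s}"] s
    by (intro integrable_on_mult_continuous) auto
  have "\<phi> s - \<phi> 0 \<le> integral {0..s} (\<lambda>r. a r * \<phi> r + b r)"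
    using s continuous_on_subset[OF \<phi>_cont, of "{0..s}"] \<phi>_deriv \<phi>'_le
      integrable_add[OF a\<phi>_int sub_int[OF b_int]]
    by (intro derivative_le_imp_diff_le_integral[where \<phi>' = \<phi>']) auto
  also have "\<dots> = integral {0..s} (\<lambda>r. a r * \<phi> r) + integral {0..s} b"
    using a\<phi>_int sub_int[OF b_int] by (rule integral_add)
  also have "integral {0..s} b \<le> integral {0..T} b"
    using s sub_int[OF b_int] b_int b_nonneg by (intro integral_subset_le) auto
  finally show ?thesis by simp
qed

lemma gronwall_inequality_of_derivative_le:
  fixes \<phi> a b :: "real \<Rightarrow> real"
  assumes \<phi>_cont: "continuous_on {0..T} \<phi>"
    and \<phi>_deriv: "\<And>t. t \<in> {0<..<T} \<Longrightarrow> (\<phi> has_real_derivative \<phi>' t) (at t)"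
    and \<phi>'_le: "\<And>t. t \<in> {0<..<T} \<Longrightarrow> \<phi>' t \<le> a t * \<phi> t + b t"
    and a_int: "a integrable_on {0..T}" and b_int: "b integrable_on {0..T}"
    and a_nonneg: "\<And>t. 0 \<le> a t" and b_nonneg: "\<And>t. 0 \<le> b t"
    and \<phi>_nonneg: "\<And>t. 0 \<le> \<phi> t" and t: "t \<in> {0..T}"
  shows "\<phi> t \<le> (\<phi> 0 + integral {0..T} b) * exp (integral {0..t} a)"
proof (rule gronwall_inequality[OF \<phi>_cont a_int a_nonneg \<phi>_nonneg _ _ t])
  have "0 \<le> integral {0..T} b" using b_int by (rule integral_nonneg) (rule b_nonneg)
  thus "0 \<le> \<phi> 0 + integral {0..T} b" using \<phi>_nonneg[of 0] by linarith
qed (use integral_form_of_derivative_le[OF assms(1-7)] in \<open>simp add: add.assoc\<close>)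

lemma has_integral_exp_mult:
  fixes c :: real
  assumes "c \<noteq> 0" "a \<le> b"
  shows "((\<lambda>t. exp (c * t)) has_integral (exp (c * b) - exp (c * a)) / c) {a..b}"
proof -
  have "((\<lambda>t. exp (c * t) / c) has_real_derivative exp (c * x)) (at x)" for x
    using assms(1) by (auto intro!: derivative_eq_intros)
  hence "((\<lambda>t. exp (c * t)) has_integral exp (c * b) / c - exp (c * a) / c) {a..b}"
    using assms(2) by (intro fundamental_theorem_of_calculus)
      (auto simp: has_real_derivative_iff_has_vector_derivative has_vector_derivative_at_within)
  thus ?thesis by (simp add: diff_divide_distrib)
qed

section \<open>Differentiating the norm of an R-smooth space\<close>

lemma Dnorm_tendsto:
  fixes y z :: "'a::real_normed_vector"
  assumes smooth: "R_smooth TYPE('a)" and y: "y \<noteq> 0"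
  shows "((\<lambda>s::real. (norm (y + s *\<^sub>R z) - norm y) / s) \<longlongrightarrow> Dnorm y z) (at 0)"
proof -
  define c where "c = norm y"
  have c: "0 < c" using y by (simp add: c_def)
  define u where "u = inverse c *\<^sub>R y"
  define z' where "z' = inverse c *\<^sub>R z"
  have u: "norm u = 1" using c by (simp add: u_def c_def)
  obtain L where L: "((\<lambda>s::real. (norm (u + s *\<^sub>R z') - norm u) / s) \<longlongrightarrow> L) (at 0)"
    using smooth u unfolding R_smooth_def by blast
  have scale: "(norm (y + s *\<^sub>R z) - norm y) / s = c * ((norm (u + s *\<^sub>R z') - norm u) / s)"
    for s :: real
  proof -
    have "y + s *\<^sub>R z = c *\<^sub>R (u + s *\<^sub>R z')" using c by (simp add: u_def z'_def algebra_simps)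
    hence "norm (y + s *\<^sub>R z) = c * norm (u + s *\<^sub>R z')" using c by simp
    thus ?thesis using u by (simp add: c_def algebra_simps)
  qed
  have lim: "((\<lambda>s::real. (norm (y + s *\<^sub>R z) - norm y) / s) \<longlongrightarrow> c * L) (at 0)"
    unfolding scale by (intro tendsto_intros L)
  hence "Dnorm y z = c * L" unfolding Dnorm_def by (intro tendsto_Lim) auto
  thus ?thesis using lim by simp
qed

lemma Dnorm_add_le:
  fixes y a b :: "'a::real_normed_vector"
  assumes smooth: "R_smooth TYPE('a)" and y: "y \<noteq> 0"
  shows "Dnorm y (a + b) \<le> norm a + Dnorm y b"
proof (rule tendsto_le[of "at_right (0::real)"])
  show "((\<lambda>s::real. (norm (y + s *\<^sub>R (a + b)) - norm y) / s) \<longlongrightarrow> Dnorm y (a + b)) (at_right 0)"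
    by (rule tendsto_mono[OF at_within_le_at Dnorm_tendsto[OF smooth y]])
  show "((\<lambda>s::real. norm a + (norm (y + s *\<^sub>R b) - norm y) / s) \<longlongrightarrow> norm a + Dnorm y b) (at_right 0)"
    by (intro tendsto_intros tendsto_mono[OF at_within_le_at Dnorm_tendsto[OF smooth y]])
  have "(norm (y + s *\<^sub>R (a + b)) - norm y) / s \<le> norm a + (norm (y + s *\<^sub>R b) - norm y) / s"
    if "0 < s" for s :: real
  proof -
    have "norm (y + s *\<^sub>R (a + b)) \<le> norm (y + s *\<^sub>R b) + norm (s *\<^sub>R a)"
      using norm_triangle_ineq[of "y + s *\<^sub>R b" "s *\<^sub>R a"] by (simp add: algebra_simps)
    thus ?thesis using that by (simp add: field_simps)
  qed
  thus "\<forall>\<^sub>F s in at_right 0.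
      (norm (y + s *\<^sub>R (a + b)) - norm y) / s \<le> norm a + (norm (y + s *\<^sub>R b) - norm y) / s"
    by (rule eventually_mono[OF eventually_at_right_less])
qed simp

lemma has_vector_derivative_remainder:
  fixes e :: "real \<Rightarrow> 'a::real_normed_vector"
  assumes "(e has_vector_derivative D) (at t)"
  shows "((\<lambda>h. norm (e (t + h) - e t - h *\<^sub>R D) / \<bar>h\<bar>) \<longlongrightarrow> 0) (at 0)"
proof -
  have "((\<lambda>y. norm (e y - e t - (y - t) *\<^sub>R D) / norm (y - t)) \<longlongrightarrow> 0) (at t)"
    using assms unfolding has_vector_derivative_def has_derivative_iff_norm by blast
  thus ?thesis by (subst (asm) LIM_offset_zero_iff) auto
qed

lemma has_real_derivative_norm:
  fixes e :: "real \<Rightarrow> 'a::real_normed_vector"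
  assumes smooth: "R_smooth TYPE('a)"
    and e: "(e has_vector_derivative D) (at t)" and e_nz: "e t \<noteq> 0"
  shows "((\<lambda>r. norm (e r)) has_real_derivative Dnorm (e t) D) (at t)"
  unfolding DERIV_def
proof -
  define q1 where "q1 h = (norm (e (t + h)) - norm (e t)) / h" for h
  define q2 where "q2 h = (norm (e t + h *\<^sub>R D) - norm (e t)) / h" for h
  have "((\<lambda>h. q1 h - q2 h) \<longlongrightarrow> 0) (at 0)"
  proof (rule Lim_null_comparison[OF _ has_vector_derivative_remainder[OF e]])
    have "norm (q1 h - q2 h) \<le> norm (e (t + h) - e t - h *\<^sub>R D) / \<bar>h\<bar>" if "h \<noteq> 0" for h
    proof -
      have "q1 h - q2 h = (norm (e (t + h)) - norm (e t + h *\<^sub>R D)) / h"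
        using that by (simp add: q1_def q2_def field_simps)
      moreover have "\<bar>norm (e (t + h)) - norm (e t + h *\<^sub>R D)\<bar> \<le> norm (e (t + h) - e t - h *\<^sub>R D)"
        using norm_triangle_ineq3[of "e (t + h)" "e t + h *\<^sub>R D"] by (simp add: algebra_simps)
      ultimately show ?thesis by (simp add: divide_right_mono)
    qed
    thus "\<forall>\<^sub>F h in at 0. norm (q1 h - q2 h) \<le> norm (e (t + h) - e t - h *\<^sub>R D) / \<bar>h\<bar>"
      by (auto simp: eventually_at_filter)
  qed
  moreover have "(q2 \<longlongrightarrow> Dnorm (e t) D) (at 0)"
    unfolding q2_def by (rule Dnorm_tendsto[OF smooth e_nz])
  ultimately have "((\<lambda>h. (q1 h - q2 h) + q2 h) \<longlongrightarrow> 0 + Dnorm (e t) D) (at 0)"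
    by (intro tendsto_intros)
  thus "((\<lambda>h. (norm (e (t + h)) - norm (e t)) / h) \<longlongrightarrow> Dnorm (e t) D) (at 0)"
    by (simp add: q1_def)
qed

text \<open>At a zero of \<open>e\<close> the derivative is \<open>0\<close>, since \<open>\<parallel>e(t + h)\<parallel>\<^sup>p = O(\<bar>h\<bar>\<^sup>p)\<close> and \<open>p > 1\<close>,
  in agreement with the convention \<open>pform p y 0 = 0\<close>.\<close>
lemma has_real_derivative_norm_powr:
  fixes e :: "real \<Rightarrow> 'a::real_normed_vector"
  assumes smooth: "R_smooth TYPE('a)" and e: "(e has_vector_derivative D) (at t)" and p: "1 < p"
  shows "((\<lambda>r. norm (e r) powr p) has_real_derivative p * pform p D (e t)) (at t)"
proof (cases "e t = 0")
  case False
  have "((\<lambda>z. z powr p) \<circ> (\<lambda>r. norm (e r)) has_real_derivative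
      (p * norm (e t) powr (p - 1)) * Dnorm (e t) D) (at t)"
    using False by (intro DERIV_chain has_real_derivative_powr has_real_derivative_norm[OF smooth e]) auto
  thus ?thesis using False by (simp add: pform_def o_def mult.assoc)
next
  case True
  define C where "C = norm D + 1"
  have C: "0 < C" unfolding C_def using norm_ge_zero[of D] by linarith
  have "((\<lambda>h. (norm (e (t + h)) powr p - norm (e t) powr p) / h) \<longlongrightarrow> 0) (at 0)"
  proof (rule Lim_null_comparison)
    have "((\<lambda>h::real. \<bar>h\<bar> powr (p - 1)) \<longlongrightarrow> 0) (at 0)"
      by (rule tendsto_zero_powrI) (use p in \<open>auto intro!: tendsto_eq_intros\<close>)
    thus "((\<lambda>h. C powr p * \<bar>h\<bar> powr (p - 1)) \<longlongrightarrow> 0) (at 0)"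
      using tendsto_mult_right_zero by blast
    have "\<forall>\<^sub>F h in at 0. norm (e (t + h) - e t - h *\<^sub>R D) / \<bar>h\<bar> < 1"
      using has_vector_derivative_remainder[OF e] by (rule order_tendstoD) simp
    moreover have "\<forall>\<^sub>F h in at 0. h \<noteq> 0" by (simp add: eventually_at_filter)
    ultimately show "\<forall>\<^sub>F h in at 0.
        norm ((norm (e (t + h)) powr p - norm (e t) powr p) / h) \<le> C powr p * \<bar>h\<bar> powr (p - 1)"
    proof eventually_elim
      case (elim h)
      have h: "0 < \<bar>h\<bar>" using elim by simp
      have "norm (e (t + h) - h *\<^sub>R D) < \<bar>h\<bar>" using elim True h by (simp add: divide_less_eq)
      hence "norm (e (t + h)) \<le> \<bar>h\<bar> * C"
        using norm_triangle_ineq[of "e (t + h) - h *\<^sub>R D" "h *\<^sub>R D"] by (simp add: C_def algebra_simps)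
      hence "norm (e (t + h)) powr p \<le> (\<bar>h\<bar> * C) powr p"
        using p by (intro powr_mono2) auto
      also have "\<dots> = \<bar>h\<bar> powr (p - 1) * \<bar>h\<bar> * C powr p"
        using h C by (simp add: powr_mult powr_diff)
      finally have "norm (e (t + h)) powr p / \<bar>h\<bar> \<le> C powr p * \<bar>h\<bar> powr (p - 1)"
        using h by (simp add: divide_le_eq algebra_simps)
      thus ?case using True p by simp
    qed
  qed
  thus ?thesis using True unfolding DERIV_def by (simp add: pform_def)
qed

lemma young_powr:
  fixes p x r :: real
  assumes p: "1 < p" and x: "0 \<le> x" and r: "0 \<le> r"
  shows "p * x powr (p - 1) * r \<le> r powr p + (p - 1) * x powr p"
proof -
  have "r * x powr (p - 1) \<le> r powr p / p + (x powr (p - 1)) powr (p / (p - 1)) / (p / (p - 1))"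
    using p r by (intro Youngs_inequality) (auto simp: field_simps)
  also have "(x powr (p - 1)) powr (p / (p - 1)) = x powr p"
    using p by (simp add: powr_powr)
  finally show ?thesis using p by (simp add: field_simps)
qed

lemma pform_add_le:
  fixes r d y :: "'a::real_normed_vector"
  assumes smooth: "R_smooth TYPE('a)" and p: "1 < p"
  shows "p * pform p (r + d) y \<le> norm r powr p + (p - 1) * norm y powr p + p * pform p d y"
proof (cases "y = 0")
  case False
  have "pform p (r + d) y \<le> norm y powr (p - 1) * (norm r + Dnorm y d)"
    using Dnorm_add_le[OF smooth False] False by (simp add: pform_def mult_left_mono)
  also have "\<dots> = norm y powr (p - 1) * norm r + pform p d y"
    using False by (simp add: pform_def algebra_simps)
  finally have "p * pform p (r + d) y \<le> p * (norm y powr (p - 1) * norm r + pform p d y)"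
    using p by (intro mult_left_mono) auto
  thus ?thesis using young_powr[OF p, of "norm y" "norm r"] by (simp add: algebra_simps)
qed (use p in \<open>simp add: pform_def\<close>)

section \<open>The error estimate\<close>

lemma
  fixes f :: "real \<Rightarrow> real"
  assumes "integrable (lebesgue_on {a<..<b}) f"
  shows integrable_on_closed_interval_if_lebesgue: "f integrable_on {a..b}"
    and integral_closed_interval_eq_lebesgue: "integral {a..b} f = integral\<^sup>L (lebesgue_on {a<..<b}) f"
  using integrable_on_lebesgue_on[OF assms] lebesgue_integral_eq_integral[OF assms]
  by (simp_all add: integrable_on_open_interval_real integral_open_interval_real)

lemma Lp_pow_nonneg: "0 \<le> Lp_pow p S f"
  unfolding Lp_pow_def by (rule Bochner_Integration.integral_nonneg) simp

lemma Lp_pow_le_integral: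
  fixes f :: "real \<Rightarrow> 'a::real_normed_vector"
  assumes F: "F integrable_on {a..b}" and le: "\<And>t. t \<in> {a<..<b} \<Longrightarrow> norm (f t) powr q \<le> F t"
  shows "Lp_pow q {a<..<b} f \<le> integral {a..b} F"
proof (cases "integrable (lebesgue_on {a<..<b}) (\<lambda>t. norm (f t) powr q)")
  case True
  have "Lp_pow q {a<..<b} f = integral {a<..<b} (\<lambda>t. norm (f t) powr q)"
    unfolding Lp_pow_def by (rule lebesgue_integral_eq_integral[OF True]) simp
  also have "\<dots> \<le> integral {a<..<b} F"
    using integrable_on_lebesgue_on[OF True] F le
    by (intro integral_le) (auto simp: integrable_on_open_interval_real)
  finally show ?thesis by (simp add: integral_open_interval_real)
next
  case False
  have "0 \<le> integral {a<..<b} F"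
    using F le by (intro integral_nonneg) (auto simp: integrable_on_open_interval_real
        intro: order_trans[OF powr_ge_zero])
  thus ?thesis using False by (simp add: Lp_pow_def not_integrable_integral_eq integral_open_interval_real)
qed

lemma norm_powr_gronwall_bound:
  fixes e R d :: "real \<Rightarrow> 'a::real_normed_vector" and g \<kappa> :: "real \<Rightarrow> real"
  assumes smooth: "R_smooth TYPE('a)" and p: "1 < p"
    and e_cont: "continuous_on {0..T} e"
    and e_deriv: "\<And>t. t \<in> {0<..<T} \<Longrightarrow> (e has_vector_derivative R t + d t) (at t)"
    and d_le: "\<And>t. t \<in> {0<..<T} \<Longrightarrow> pform p (d t) (e t) \<le> g t + \<kappa> t * norm (e t) powr p"
    and g_nonneg: "\<And>t. 0 \<le> g t" and \<kappa>_nonneg: "\<And>t. 0 \<le> \<kappa> t"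
    and g_int: "integrable (lebesgue_on {0<..<T}) g"
    and \<kappa>_int: "integrable (lebesgue_on {0<..<T}) \<kappa>"
    and R_int: "integrable (lebesgue_on {0<..<T}) (\<lambda>t. norm (R t) powr p)"
    and t: "t \<in> {0..T}"
  shows "norm (e t) powr p \<le>
      (norm (e 0) powr p + Lp_pow p {0<..<T} R + p * integral\<^sup>L (lebesgue_on {0<..<T}) g)
      * exp ((p - 1) * t + p * integral\<^sup>L (lebesgue_on {0<..<T}) \<kappa>)"
proof -
  define a where "a t = (p - 1) + p * \<kappa> t" for t
  define b where "b t = norm (R t) powr p + p * g t" for t
  have \<kappa>_i: "\<kappa> integrable_on {0..T}" and g_i: "g integrable_on {0..T}"
    and R_i: "(\<lambda>t. norm (R t) powr p) integrable_on {0..T}"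
    by (fact integrable_on_closed_interval_if_lebesgue[OF \<kappa>_int],
        fact integrable_on_closed_interval_if_lebesgue[OF g_int],
        fact integrable_on_closed_interval_if_lebesgue[OF R_int])
  have \<kappa>_i_t: "\<kappa> integrable_on {0..t}" using integrable_on_subinterval[OF \<kappa>_i] t by auto
  have a_i: "a integrable_on {0..T}" unfolding a_def using \<kappa>_i
    by (intro integrable_add integrable_on_mult_right integrable_const_ivl)
  have b_i: "b integrable_on {0..T}" unfolding b_def using R_i g_i
    by (intro integrable_add integrable_on_mult_right)
  have "norm (e t) powr p \<le> (norm (e 0) powr p + integral {0..T} b) * exp (integral {0..t} a)"
  proof (rule gronwall_inequality_of_derivative_le[OF _ has_real_derivative_norm_powr[OF smooth e_deriv p]])
    show "continuous_on {0..T} (\<lambda>t. norm (e t) powr p)"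
      using p by (intro continuous_on_powr' continuous_intros e_cont) auto
    fix s assume s: "s \<in> {0<..<T}"
    have "p * pform p (d s) (e s) \<le> p * (g s + \<kappa> s * norm (e s) powr p)"
      using d_le[OF s] p by simp
    thus "p * pform p (R s + d s) (e s) \<le> a s * norm (e s) powr p + b s"
      using pform_add_le[OF smooth p, of "R s" "d s" "e s"] by (simp add: a_def b_def algebra_simps)
  qed (use t p a_i b_i g_nonneg \<kappa>_nonneg in \<open>auto simp: a_def b_def\<close>)
  also have "integral {0..T} b = integral {0..T} (\<lambda>t. norm (R t) powr p) + integral {0..T} (\<lambda>t. p * g t)"
    unfolding b_def using R_i integrable_on_mult_right[OF g_i] by (rule integral_add)
  also have "\<dots> = Lp_pow p {0<..<T} R + p * integral\<^sup>L (lebesgue_on {0<..<T}) g"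
    by (simp add: Lp_pow_def integral_closed_interval_eq_lebesgue[OF R_int]
        integral_closed_interval_eq_lebesgue[OF g_int])
  also have "integral {0..t} a = integral {0..t} (\<lambda>_. p - 1) + integral {0..t} (\<lambda>s. p * \<kappa> s)"
    unfolding a_def using integrable_const_ivl integrable_on_mult_right[OF \<kappa>_i_t]
    by (rule integral_add)
  also have "\<dots> = (p - 1) * t + p * integral {0..t} \<kappa>"
    using t by simp
  also have "(norm (e 0) powr p + (Lp_pow p {0<..<T} R + p * integral\<^sup>L (lebesgue_on {0<..<T}) g))
      * exp ((p - 1) * t + p * integral {0..t} \<kappa>)
    \<le> (norm (e 0) powr p + Lp_pow p {0<..<T} R + p * integral\<^sup>L (lebesgue_on {0<..<T}) g)
      * exp ((p - 1) * t + p * integral\<^sup>L (lebesgue_on {0<..<T}) \<kappa>)"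
    unfolding add.assoc
  proof (rule mult_left_mono)
    have "integral {0..t} \<kappa> \<le> integral\<^sup>L (lebesgue_on {0<..<T}) \<kappa>"
      using t \<kappa>_i_t \<kappa>_i \<kappa>_nonneg
      by (simp add: integral_subset_le flip: integral_closed_interval_eq_lebesgue[OF \<kappa>_int])
    thus "exp ((p - 1) * t + p * integral {0..t} \<kappa>)
        \<le> exp ((p - 1) * t + p * integral\<^sup>L (lebesgue_on {0<..<T}) \<kappa>)"
      using p by simp
    show "0 \<le> norm (e 0) powr p + (Lp_pow p {0<..<T} R + p * integral\<^sup>L (lebesgue_on {0<..<T}) g)"
      using p g_nonneg Lp_pow_nonneg[of p _ R] by simp
  qed
  finally show ?thesis .
qed

lemma Lp_pow_le_of_exponential_bound:
  fixes e :: "real \<Rightarrow> 'a::real_normed_vector"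
  assumes p: "1 < p" and q: "0 < q" and T: "0 \<le> T" and K: "0 \<le> K"
    and bound: "\<And>t. t \<in> {0<..<T} \<Longrightarrow> norm (e t) powr p \<le> K * exp ((p - 1) * t + p * L)"
  shows "Lp_pow q {0<..<T} e
      \<le> K powr (q / p) * (p * (exp (q * (p - 1) * T / p) - 1) / (q * (p - 1))) * exp (q * L)"
proof -
  define c where "c = q * (p - 1) / p"
  have c: "0 < c" using p q by (simp add: c_def)
  define F where "F t = K powr (q / p) * exp (q * L) * exp (c * t)" for t
  have "(F has_integral K powr (q / p) * exp (q * L) * ((exp (c * T) - exp (c * 0)) / c)) {0..T}"
    unfolding F_def using c T by (intro has_integral_mult_right has_integral_exp_mult) auto
  moreover have "norm (e t) powr q \<le> F t" if t: "t \<in> {0<..<T}" for t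
  proof -
    have "norm (e t) powr q = (norm (e t) powr p) powr (q / p)" using p by (simp add: powr_powr)
    also have "\<dots> \<le> (K * exp ((p - 1) * t + p * L)) powr (q / p)"
      using bound[OF t] p q by (intro powr_mono2) auto
    also have "\<dots> = K powr (q / p) * exp (((p - 1) * t + p * L) * (q / p))"
      using K by (simp add: powr_mult exp_powr_real)
    also have "((p - 1) * t + p * L) * (q / p) = q * L + c * t"
      using p by (simp add: c_def field_simps)
    finally show ?thesis by (simp add: F_def exp_add algebra_simps)
  qed
  ultimately have "Lp_pow q {0<..<T} e \<le> K powr (q / p) * exp (q * L) * ((exp (c * T) - exp (c * 0)) / c)"
    using Lp_pow_le_integral by (metis has_integral_integrable integral_unique)
  also have "\<dots> = K powr (q / p) * (p * (exp (q * (p - 1) * T / p) - 1) / (q * (p - 1))) * exp (q * L)"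
    using p q by (simp add: c_def field_simps)
  finally show ?thesis .
qed

theorem residual_error_estimate:
  fixes e R d :: "real \<Rightarrow> 'a::real_normed_vector" and g \<kappa> :: "real \<Rightarrow> real"
  assumes smooth: "R_smooth TYPE('a)" and p: "1 < p" and q: "0 < q" and T: "0 \<le> T"
    and e_cont: "continuous_on {0..T} e"
    and e_deriv: "\<And>t. t \<in> {0<..<T} \<Longrightarrow> (e has_vector_derivative R t + d t) (at t)"
    and d_le: "\<And>t. t \<in> {0<..<T} \<Longrightarrow> pform p (d t) (e t) \<le> g t + \<kappa> t * norm (e t) powr p"
    and g_nonneg: "\<And>t. 0 \<le> g t" and \<kappa>_nonneg: "\<And>t. 0 \<le> \<kappa> t"
    and g_int: "integrable (lebesgue_on {0<..<T}) g"
    and \<kappa>_int: "integrable (lebesgue_on {0<..<T}) \<kappa>"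
    and R_int: "integrable (lebesgue_on {0<..<T}) (\<lambda>t. norm (R t) powr p)"
  shows "Lp_pow q {0<..<T} e \<le>
      (norm (e 0) powr p + Lp_pow p {0<..<T} R + p * integral\<^sup>L (lebesgue_on {0<..<T}) g) powr (q / p)
      * (p * (exp (q * (p - 1) * T / p) - 1) / (q * (p - 1)))
      * exp (q * integral\<^sup>L (lebesgue_on {0<..<T}) \<kappa>)"
proof (rule Lp_pow_le_of_exponential_bound[OF p q T])
  show "0 \<le> norm (e 0) powr p + Lp_pow p {0<..<T} R + p * integral\<^sup>L (lebesgue_on {0<..<T}) g"
    using p g_nonneg by (intro add_nonneg_nonneg Lp_pow_nonneg mult_nonneg_nonneg
        Bochner_Integration.integral_nonneg) auto
qed (use norm_powr_gronwall_bound[OF assms(1,2,5-12)] in auto)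

lemma pform_le_of_submonotone_subordinate:
  assumes "neg_submonotone p A DA M \<psi> \<Lambda>" "subordinate \<psi> B DA M \<gamma> \<rho>"
    and "z \<in> DA" "y \<in> M" "\<gamma> z y \<le> \<Gamma>"
  shows "pform p (A z - A y) (z - y) \<le> \<Gamma> * \<bar>\<rho> (B z - B y)\<bar> + \<bar>\<Lambda> z y\<bar> * norm (z - y) powr p"
proof -
  have \<rho>: "0 \<le> \<rho> (B z - B y)" using assms(2) unfolding subordinate_def by blast
  have "\<psi> z y \<le> \<gamma> z y * \<rho> (B z - B y)"
    using assms(2-4) unfolding subordinate_def by (auto dest: abs_le_D1)
  also have "\<dots> \<le> \<Gamma> * \<rho> (B z - B y)" using assms(5) \<rho> by (rule mult_right_mono)
  finally have "\<psi> z y \<le> \<Gamma> * \<bar>\<rho> (B z - B y)\<bar>" using \<rho> by simp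
  thus ?thesis using assms(1,3,4) unfolding neg_submonotone_def by fastforce
qed

lemma abs_le_SUP_abs_of_continuous_on:
  fixes f :: "real \<Rightarrow> real"
  assumes "continuous_on {a..b} f" "t \<in> {a..b}"
  shows "\<bar>f t\<bar> \<le> (SUP s\<in>{a..b}. \<bar>f s\<bar>)"
  using assms by (intro cSUP_upper bounded_imp_bdd_above compact_imp_bounded compact_continuous_image
      continuous_intros) auto

lemma mono_on_Lp_norm_le:
  assumes "mono_on {0..} h" "0 < p" "Lp_pow p S g \<le> c"
  shows "h (Lp_norm p S g) \<le> h (c powr (1 / p))"
  using assms Lp_pow_nonneg[of p S g]
  by (auto simp: Lp_norm_def intro!: mono_onD[OF assms(1)] powr_mono2)

theorem corollary1:
  fixes p q T :: real
    and A :: "real \<Rightarrow> 'x::banach \<Rightarrow> 'x" and B :: "real \<Rightarrow> 'x \<Rightarrow> 'y::banach"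
    and DA DB :: "real \<Rightarrow> 'x set"
    and w w\<^sub>\<theta> :: "real \<Rightarrow> 'x" and w0 :: 'x
    and \<psi> \<Lambda> \<gamma> :: "real \<Rightarrow> 'x \<Rightarrow> 'x \<Rightarrow> real" and \<rho> :: "'y \<Rightarrow> real"
    and Teq :: "'a set" and Tin :: "'b set" and Tbn :: "'c set"
    and \<alpha>eq \<alpha>in \<alpha>bn :: real
    and Qeq :: "nat \<Rightarrow> (real \<Rightarrow> 'x) \<Rightarrow> 'a list \<Rightarrow> real"
    and Qin :: "nat \<Rightarrow> 'x \<Rightarrow> 'b list \<Rightarrow> real"
    and Qbn :: "nat \<Rightarrow> (real \<Rightarrow> 'y) \<Rightarrow> 'c list \<Rightarrow> real"
    and \<beta>eq :: "(real \<Rightarrow> 'x) \<Rightarrow> real" and \<beta>in :: "'x \<Rightarrow> real" and \<beta>bn :: "(real \<Rightarrow> 'y) \<Rightarrow> real"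
    and Meq Min Mbn :: nat
    and Seq :: "'a list" and Sin :: "'b list" and Sbn :: "'c list"
    and h :: "real \<Rightarrow> real"
  defines "I \<equiv> {0<..<T}"
    and "M \<equiv> (\<lambda>t. {y \<in> DA t. B t y = 0})"
    and "Req \<equiv> (\<lambda>t. vector_derivative w\<^sub>\<theta> (at t) - A t (w\<^sub>\<theta> t))"
    and "Rin \<equiv> w\<^sub>\<theta> 0 - w0"
    and "Rbn \<equiv> (\<lambda>t. B t (w\<^sub>\<theta> t))"
    and "\<E> \<equiv> Lp_pow q {0<..<T} (\<lambda>t. w\<^sub>\<theta> t - w t)"
    and "ETeq \<equiv> Qeq Meq (\<lambda>t. vector_derivative w\<^sub>\<theta> (at t) - A t (w\<^sub>\<theta> t)) Seq"
    and "ETin \<equiv> Qin Min (w\<^sub>\<theta> 0 - w0) Sin"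
    and "ETbn \<equiv> Qbn Mbn (\<lambda>t. B t (w\<^sub>\<theta> t)) Sbn"
  assumes p: "p > 1" and q: "1 \<le> q" and T: "T > 0"
    and smooth: "R_smooth TYPE('x)"
    and dom_sub: "\<And>t. t \<in> {0..T} \<Longrightarrow> subspace (DA t) \<and> subspace (DB t) \<and> DA t \<subseteq> DB t"
    and w_cont: "continuous_on {0..T} w" and w_C1: "C1_on I w"
    and w_eq: "\<And>t. t \<in> I \<Longrightarrow> (w has_vector_derivative A t (w t)) (at t)"
    and w_init: "w 0 = w0"
    and w_M: "\<And>t. t \<in> I \<Longrightarrow> w t \<in> M t"
    and wt_cont: "continuous_on {0..T} w\<^sub>\<theta>" and wt_C1: "C1_on I w\<^sub>\<theta>"
    and wt_dom: "\<And>t. t \<in> {0..T} \<Longrightarrow> w\<^sub>\<theta> t \<in> DA t"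
    and submono: "\<And>t. t \<in> {0..T} \<Longrightarrow>
        neg_submonotone p (A t) (DA t) (M t) (\<psi> t) (\<Lambda> t)"
    and subord: "\<And>t. t \<in> {0..T} \<Longrightarrow> subordinate (\<psi> t) (B t) (DA t) (M t) (\<gamma> t) \<rho>"
    and \<gamma>_cont: "continuous_on {0..T} (\<lambda>t. \<gamma> t (w\<^sub>\<theta> t) (w t))"
    and \<Lambda>_L1: "integrable (lebesgue_on I) (\<lambda>t. \<Lambda> t (w\<^sub>\<theta> t) (w t))"
    and \<alpha>: "\<alpha>eq > 0" "\<alpha>in > 0" "\<alpha>bn > 0"
    and \<beta>_nonneg: "\<And>v. \<beta>eq v \<ge> 0" "\<And>y. \<beta>in y \<ge> 0" "\<And>g. \<beta>bn g \<ge> 0"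
    and Qeq_err: "\<And>m zs v. m \<ge> 1 \<Longrightarrow> length zs = m \<Longrightarrow> set zs \<subseteq> Teq \<Longrightarrow> v \<in> Lp p I \<Longrightarrow>
        \<bar>Lp_pow p I v - Qeq m v zs\<bar> \<le> \<beta>eq v * real m powr (- \<alpha>eq)"
    and Qin_err: "\<And>m zs y. m \<ge> 1 \<Longrightarrow> length zs = m \<Longrightarrow> set zs \<subseteq> Tin \<Longrightarrow>
        \<bar>norm y powr p - Qin m y zs\<bar> \<le> \<beta>in y * real m powr (- \<alpha>in)"
    and Qbn_err: "\<And>m zs g. m \<ge> 1 \<Longrightarrow> length zs = m \<Longrightarrow> set zs \<subseteq> Tbn \<Longrightarrow> g \<in> Lp p I \<Longrightarrow>
        \<bar>Lp_pow p I g - Qbn m g zs\<bar> \<le> \<beta>bn g * real m powr (- \<alpha>bn)"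
    and train: "Meq \<ge> 1" "length Seq = Meq" "set Seq \<subseteq> Teq"
               "Min \<ge> 1" "length Sin = Min" "set Sin \<subseteq> Tin"
               "Mbn \<ge> 1" "length Sbn = Mbn" "set Sbn \<subseteq> Tbn"
    and Req_Lp: "Req \<in> Lp p I" and Rbn_Lp: "Rbn \<in> Lp p I"
    and h_mono: "mono_on {0..} h" and h_nonneg: "\<And>\<mu>. \<mu> \<ge> 0 \<Longrightarrow> h \<mu> \<ge> 0"
    and h_lim: "(h \<longlongrightarrow> 0) (at_right 0)"
    and \<rho>_h: "\<And>g. g \<in> Lp p I \<Longrightarrow>
        integrable (lebesgue_on I) (\<lambda>t. \<rho> (g t)) \<and>
        integral\<^sup>L (lebesgue_on I) (\<lambda>t. \<bar>\<rho> (g t)\<bar>) \<le> h (Lp_norm p I g)"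
  shows "\<E> \<le> (ETeq + \<beta>eq Req * real Meq powr (- \<alpha>eq) + ETin + \<beta>in Rin * real Min powr (- \<alpha>in)
            + p * (SUP t\<in>{0..T}. \<bar>\<gamma> t (w\<^sub>\<theta> t) (w t)\<bar>)
                * h ((ETbn + \<beta>bn Rbn * real Mbn powr (- \<alpha>bn)) powr (1 / p))) powr (q / p)
          * (p * (exp (q * (p - 1) * T / p) - 1) / (q * (p - 1)))
          * exp (q * integral\<^sup>L (lebesgue_on I) (\<lambda>t. \<bar>\<Lambda> t (w\<^sub>\<theta> t) (w t)\<bar>))"
proof -
  have I_eq: "I = {0<..<T}" and Rin_eq: "Rin = w\<^sub>\<theta> 0 - w 0"
    and E_eq: "\<E> = Lp_pow q I (\<lambda>t. w\<^sub>\<theta> t - w t)"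
    using assms(1,4,6) w_init by simp_all
  have ET: "ETeq = Qeq Meq Req Seq" "ETin = Qin Min Rin Sin" "ETbn = Qbn Mbn Rbn Sbn"
    using assms(3-5,7-9) by simp_all
  obtain f' where f': "\<And>t. t \<in> I \<Longrightarrow> (w\<^sub>\<theta> has_vector_derivative f' t) (at t)"
    using wt_C1 unfolding C1_on_def by blast
  define \<Gamma> where "\<Gamma> = (SUP t\<in>{0..T}. \<bar>\<gamma> t (w\<^sub>\<theta> t) (w t)\<bar>)"
  have \<Gamma>: "\<gamma> t (w\<^sub>\<theta> t) (w t) \<le> \<Gamma>" if "t \<in> {0..T}" for t
    using abs_le_SUP_abs_of_continuous_on[OF \<gamma>_cont that] unfolding \<Gamma>_def by linarith
  have \<Gamma>_nonneg: "0 \<le> \<Gamma>"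
    using abs_le_SUP_abs_of_continuous_on[OF \<gamma>_cont, of 0] T unfolding \<Gamma>_def by force
  have \<rho>_int: "integrable (lebesgue_on I) (\<lambda>t. \<rho> (Rbn t))"
    and \<rho>_le_h: "integral\<^sup>L (lebesgue_on I) (\<lambda>t. \<bar>\<rho> (Rbn t)\<bar>) \<le> h (Lp_norm p I Rbn)"
    using \<rho>_h[OF Rbn_Lp] by auto
  have "\<E> \<le> (norm Rin powr p + Lp_pow p I Req + p * integral\<^sup>L (lebesgue_on I) (\<lambda>t. \<Gamma> * \<bar>\<rho> (Rbn t)\<bar>))
        powr (q / p) * (p * (exp (q * (p - 1) * T / p) - 1) / (q * (p - 1)))
      * exp (q * integral\<^sup>L (lebesgue_on I) (\<lambda>t. \<bar>\<Lambda> t (w\<^sub>\<theta> t) (w t)\<bar>))"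
    (is "_ \<le> ?K powr _ * ?X * ?Y")
    unfolding E_eq Rin_eq I_eq
  proof (rule residual_error_estimate[where R = Req and d = "\<lambda>t. A t (w\<^sub>\<theta> t) - A t (w t)"])
    fix t assume "t \<in> {0<..<T}"
    hence t: "t \<in> I" by (simp add: I_eq)
    have "Req t + (A t (w\<^sub>\<theta> t) - A t (w t)) = f' t - A t (w t)"
      using vector_derivative_at[OF f'[OF t]] by (simp add: assms(3))
    moreover have "((\<lambda>t. w\<^sub>\<theta> t - w t) has_vector_derivative f' t - A t (w t)) (at t)"
      using f'[OF t] w_eq[OF t] by (rule has_vector_derivative_diff)
    ultimately show "((\<lambda>t. w\<^sub>\<theta> t - w t) has_vector_derivative Req t + (A t (w\<^sub>\<theta> t) - A t (w t))) (at t)"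
      by metis
    have "t \<in> {0..T}" "w t \<in> M t" using t w_M by (auto simp: I_eq)
    thus "pform p (A t (w\<^sub>\<theta> t) - A t (w t)) (w\<^sub>\<theta> t - w t)
        \<le> \<Gamma> * \<bar>\<rho> (Rbn t)\<bar> + \<bar>\<Lambda> t (w\<^sub>\<theta> t) (w t)\<bar> * norm (w\<^sub>\<theta> t - w t) powr p"
      using pform_le_of_submonotone_subordinate[OF submono subord wt_dom _ \<Gamma>]
      by (simp add: assms(2,5))
  qed (use smooth p q T continuous_on_diff[OF wt_cont w_cont] \<Gamma>_nonneg \<rho>_int \<Lambda>_L1 Req_Lp
      in \<open>auto simp: I_eq Lp_def\<close>)
  also have "\<dots> \<le> (ETeq + \<beta>eq Req * real Meq powr (- \<alpha>eq) + ETin + \<beta>in Rin * real Min powr (- \<alpha>in)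
        + p * \<Gamma> * h ((ETbn + \<beta>bn Rbn * real Mbn powr (- \<alpha>bn)) powr (1 / p))) powr (q / p) * ?X * ?Y"
  proof -
    have "norm Rin powr p \<le> ETin + \<beta>in Rin * real Min powr (- \<alpha>in)"
      using Qin_err[OF train(4-6), of Rin] by (simp add: ET abs_le_iff)
    moreover have "Lp_pow p I Req \<le> ETeq + \<beta>eq Req * real Meq powr (- \<alpha>eq)"
      using Qeq_err[OF train(1-3) Req_Lp] by (simp add: ET abs_le_iff)
    moreover have "Lp_pow p I Rbn \<le> ETbn + \<beta>bn Rbn * real Mbn powr (- \<alpha>bn)"
      using Qbn_err[OF train(7-9) Rbn_Lp] by (simp add: ET abs_le_iff)
    hence "h (Lp_norm p I Rbn) \<le> h ((ETbn + \<beta>bn Rbn * real Mbn powr (- \<alpha>bn)) powr (1 / p))"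
      using p by (intro mono_on_Lp_norm_le[OF h_mono]) auto
    hence "p * \<Gamma> * integral\<^sup>L (lebesgue_on I) (\<lambda>t. \<bar>\<rho> (Rbn t)\<bar>)
        \<le> p * \<Gamma> * h ((ETbn + \<beta>bn Rbn * real Mbn powr (- \<alpha>bn)) powr (1 / p))"
      using \<rho>_le_h \<Gamma>_nonneg p by (intro mult_left_mono) auto
    ultimately have "?K \<le> ETeq + \<beta>eq Req * real Meq powr (- \<alpha>eq) + ETin + \<beta>in Rin * real Min powr (- \<alpha>in)
        + p * \<Gamma> * h ((ETbn + \<beta>bn Rbn * real Mbn powr (- \<alpha>bn)) powr (1 / p))"
      by (simp add: algebra_simps)
    moreover have "0 \<le> ?K"
      using p \<Gamma>_nonneg by (intro add_nonneg_nonneg Lp_pow_nonneg mult_nonneg_nonneg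
          Bochner_Integration.integral_nonneg) auto
    moreover have "0 \<le> ?X" using p q T by simp
    ultimately show ?thesis using p q by (intro mult_right_mono powr_mono2) auto
  qed
  finally show ?thesis by (simp add: \<Gamma>_def)
qed

end
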